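(* Let $n,q,L$ be positive integers and $r\in[0,1)$ with $rn\in\mathbb{N}$. Let $V=\bigcup_{i=1}^n V_i$ with $V_i=\{(i,a):a\in[q]\}$, and let $H=(V,E)$ be an $n$-uniform $n$-partite hypergraph with these parts which is $(n+(L+1)rn,\,L+1)$-sparse. Then the code $C_H=\{\psi(e):e\in E\}\subseteq[q]^n$ is $(r,L)$ list-decodable.
   Context: A hypergraph is $n$-uniform if all edges have size $n$; $n$-partite with parts $V_1,\dots,V_n$ if every edge meets each $V_i$ in exactly one vertex. For an edge $e=\{(i,x_i):i\in[n]\}$, $\psi(e)=(x_1,\dots,x_n)\in[q]^n$. An $n$-uniform hypergraph is $(v,e)$-sparse if any $e$ distinct edges $A_1,\dots,A_e$ satisfy $|\bigcup_{i=1}^e A_i|>v$. A code $C\subseteq[q]^n$ is $(r,L)$ list-decodable if every Hamming ball of radius $rn$ in $[q]^n$ contains at most $L$ codewords. *)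

theory Defs
  imports Complex_Main
begin

definition part :: "nat \<Rightarrow> nat \<Rightarrow> (nat \<times> nat) set" where
  "part q i = {(i, a) | a. a \<in> {1..q}}"

definition vertices :: "nat \<Rightarrow> nat \<Rightarrow> (nat \<times> nat) set" where
  "vertices n q = (\<Union>i\<in>{1..n}. part q i)"

definition uniform_partite :: "nat \<Rightarrow> nat \<Rightarrow> (nat \<times> nat) set set \<Rightarrow> bool" where
  "uniform_partite n q E \<longleftrightarrow>
     (\<forall>e\<in>E. e \<subseteq> vertices n q \<and> card e = n \<and>
        (\<forall>i\<in>{1..n}. card (e \<inter> part q i) = 1))"

definition sparse :: "real \<Rightarrow> nat \<Rightarrow> (nat \<times> nat) set set \<Rightarrow> bool" where
  "sparse v k E \<longleftrightarrow> (\<forall>F\<subseteq>E. card F = k \<longrightarrow> real (card (\<Union>F)) > v)"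

text \<open>Words of [q]^n as functions on {1..n}, extended by 0 outside.\<close>
definition words :: "nat \<Rightarrow> nat \<Rightarrow> (nat \<Rightarrow> nat) set" where
  "words n q = {x. (\<forall>i\<in>{1..n}. x i \<in> {1..q}) \<and> (\<forall>i. i \<notin> {1..n} \<longrightarrow> x i = 0)}"

definition psi :: "nat \<Rightarrow> (nat \<times> nat) set \<Rightarrow> (nat \<Rightarrow> nat)" where
  "psi n e = (\<lambda>i. if i \<in> {1..n} then (THE a. (i, a) \<in> e) else 0)"

definition hamming :: "nat \<Rightarrow> (nat \<Rightarrow> nat) \<Rightarrow> (nat \<Rightarrow> nat) \<Rightarrow> nat" where
  "hamming n x y = card {i\<in>{1..n}. x i \<noteq> y i}"

definition list_decodable :: "nat \<Rightarrow> nat \<Rightarrow> real \<Rightarrow> nat \<Rightarrow> (nat \<Rightarrow> nat) set \<Rightarrow> bool" where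
  "list_decodable n q r L C \<longleftrightarrow>
     (\<forall>y\<in>words n q. card {c\<in>C. real (hamming n c y) \<le> r * real n} \<le> L)"

end

theory Submission
  imports Defs
begin

text \<open>
  An edge e of H is the graph of the word \<psi>(e) over {1..n}. Hence the vertices of a family
  of edges all lying in the ball of radius rn around y are covered by the graph of y
  (n vertices) together with, for each edge, the at most rn vertices where it disagrees
  with y. For L+1 distinct codewords in the ball this union has at most n + (L+1)rn vertices,
  which sparseness forbids.
\<close>

lemma uniform_partite_edge_subset:
  assumes "uniform_partite n q E" "e \<in> E"
  shows "e \<subseteq> {1..n} \<times> {1..q}"
  using assms unfolding uniform_partite_def vertices_def part_def by blast

lemma uniform_partite_ex1_vertex:
  assumes "uniform_partite n q E" "e \<in> E" "i \<in> {1..n}"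
  shows "\<exists>!a. (i, a) \<in> e"
proof -
  have e_vertices: "e \<subseteq> vertices n q" and "card (e \<inter> part q i) = 1"
    using assms unfolding uniform_partite_def by auto
  then obtain x where x: "e \<inter> part q i = {x}"
    using card_1_singletonE by blast
  then obtain b where b: "x = (i, b)"
    unfolding part_def by auto
  have "a = b" if "(i, a) \<in> e" for a
  proof -
    have "(i, a) \<in> part q i"
      using that e_vertices unfolding vertices_def part_def by auto
    then show ?thesis
      using that x b by auto
  qed
  moreover have "(i, b) \<in> e"
    using x b by auto
  ultimately show ?thesis
    by blast
qed

lemma uniform_partite_edge_eq_graph:
  assumes "uniform_partite n q E" "e \<in> E"
  shows "e = (\<lambda>i. (i, psi n e i)) ` {1..n}"
proof (intro set_eqI iffI)
  fix x assume "x \<in> e"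
  moreover obtain i a where x: "x = (i, a)"
    by (cases x)
  moreover have i: "i \<in> {1..n}"
    using uniform_partite_edge_subset[OF assms] \<open>x \<in> e\<close> x by auto
  ultimately have "psi n e i = a"
    using the1_equality[OF uniform_partite_ex1_vertex[OF assms i]] unfolding psi_def by simp
  then show "x \<in> (\<lambda>i. (i, psi n e i)) ` {1..n}"
    using x i by auto
next
  fix x assume "x \<in> (\<lambda>i. (i, psi n e i)) ` {1..n}"
  then obtain i where i: "i \<in> {1..n}" and x: "x = (i, psi n e i)"
    by auto
  show "x \<in> e"
    using theI'[OF uniform_partite_ex1_vertex[OF assms i]] i x unfolding psi_def by simp
qed

lemma inj_on_psi:
  assumes "uniform_partite n q E"
  shows "inj_on (psi n) E"
proof (rule inj_onI)
  fix e f assume "e \<in> E" "f \<in> E" "psi n e = psi n f"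
  then show "e = f"
    using uniform_partite_edge_eq_graph[OF assms] by (metis (no_types))
qed

lemma card_edge_disagreement:
  assumes "uniform_partite n q E" "e \<in> E"
  shows "card {(i, a) \<in> e. a \<noteq> y i} = hamming n (psi n e) y"
proof -
  have "{(i, a) \<in> e. a \<noteq> y i} = (\<lambda>i. (i, psi n e i)) ` {i \<in> {1..n}. psi n e i \<noteq> y i}"
    by (subst uniform_partite_edge_eq_graph[OF assms]) auto
  then show ?thesis
    unfolding hamming_def by (simp add: card_image inj_on_def)
qed

lemma card_Union_edges_le:
  assumes "uniform_partite n q E" "F \<subseteq> E" "finite F"
  shows "card (\<Union>F) \<le> n + (\<Sum>e\<in>F. hamming n (psi n e) y)"
proof -
  let ?Y = "(\<lambda>i. (i, y i)) ` {1..n}"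
  let ?D = "\<lambda>e. {(i, a) \<in> e. a \<noteq> y i}"
  have "\<Union>F \<subseteq> ?Y \<union> (\<Union>e\<in>F. ?D e)"
  proof
    fix x assume "x \<in> \<Union>F"
    then obtain e where "e \<in> F" "x \<in> e"
      by blast
    moreover have "x \<in> {1..n} \<times> {1..q}"
      using \<open>e \<in> F\<close> \<open>x \<in> e\<close> assms(2) uniform_partite_edge_subset[OF assms(1)]
      by (meson subsetD)
    ultimately show "x \<in> ?Y \<union> (\<Union>e\<in>F. ?D e)"
      by (cases x) auto
  qed
  moreover have "finite (?D e)" if "e \<in> F" for e
  proof -
    have "finite e"
      using uniform_partite_edge_subset[OF assms(1)] that assms(2) finite_subset by blast
    then show ?thesis
      by (rule rev_finite_subset) auto
  qed
  ultimately have "card (\<Union>F) \<le> card (?Y \<union> (\<Union>e\<in>F. ?D e))"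
    using assms(3) by (intro card_mono) auto
  also have "\<dots> \<le> card ?Y + card (\<Union>e\<in>F. ?D e)"
    by (rule card_Un_le)
  also have "\<dots> \<le> n + (\<Sum>e\<in>F. card (?D e))"
    using card_image_le[of "{1..n}" "\<lambda>i. (i, y i)"] card_UN_le[OF assms(3), of ?D] by simp
  also have "(\<Sum>e\<in>F. card (?D e)) = (\<Sum>e\<in>F. hamming n (psi n e) y)"
    using assms(1,2) card_edge_disagreement by (intro sum.cong) auto
  finally show ?thesis .
qed

theorem lemma4p5:
  fixes n q L :: nat and r :: real and E :: "(nat \<times> nat) set set"
  assumes "n > 0" and "q > 0" and "L > 0"
    and "0 \<le> r" and "r < 1"
    and "\<exists>k::nat. r * real n = real k"
    and "uniform_partite n q E"
    and "sparse (real n + real (L + 1) * r * real n) (L + 1) E"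
  shows "list_decodable n q r L (psi n ` E)"
  unfolding list_decodable_def
proof (intro ballI leI notI)
  fix y
  let ?ball = "{e \<in> E. real (hamming n (psi n e) y) \<le> r * real n}"
  assume "L < card {c \<in> psi n ` E. real (hamming n c y) \<le> r * real n}"
  also have "{c \<in> psi n ` E. real (hamming n c y) \<le> r * real n} = psi n ` ?ball"
    by blast
  also have "card (psi n ` ?ball) = card ?ball"
    by (rule card_image, rule inj_on_subset[OF inj_on_psi[OF assms(7)]]) blast
  finally obtain F where F: "F \<subseteq> ?ball" "card F = L + 1" "finite F"
    using obtain_subset_with_card_n[of "L + 1" ?ball] by force
  have "F \<subseteq> E"
    using F(1) by blast
  have "card (\<Union>F) \<le> n + (\<Sum>e\<in>F. hamming n (psi n e) y)"
    by (rule card_Union_edges_le[OF assms(7) \<open>F \<subseteq> E\<close> F(3)])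
  then have "real (card (\<Union>F)) \<le> real n + (\<Sum>e\<in>F. real (hamming n (psi n e) y))"
    by (metis of_nat_add of_nat_le_iff of_nat_sum)
  also have "(\<Sum>e\<in>F. real (hamming n (psi n e) y)) \<le> (\<Sum>e\<in>F. r * real n)"
    using F(1) by (intro sum_mono) blast
  also have "(\<Sum>e\<in>F. r * real n) = real (L + 1) * r * real n"
    using F(2) by simp
  finally have "real (card (\<Union>F)) \<le> real n + real (L + 1) * r * real n"
    by simp
  moreover have "real (card (\<Union>F)) > real n + real (L + 1) * r * real n"
    using assms(8) \<open>F \<subseteq> E\<close> F(2) unfolding sparse_def by blast
  ultimately show False
    by linarith
qed

end
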